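(* Let $d_1,d_2$ be positive integers and $C>0$. Let $\sigma\in\{+1,-1\}^{2n}$ be a uniformly random labelling of $[2n]$ with exactly $n$ entries equal to $+1$. Let $T$ be a (fixed) tree whose vertices lie in $[2n]$ and which has at most $C\log n$ edges; for an edge $e=\{u,w\}$ of $T$ let $d_e=d_1$ if $\sigma_u=\sigma_w$ and $d_e=d_2$ otherwise. Then $$\mathbb{E}_{\sigma}\Big(\prod_{e\in T}\frac{d_e}{n}\Big)\le\Big(\frac{d_1+d_2}{2n}\Big)^{|T|}\Big(1+O\Big(\frac{(\log n)^2}{n}\Big)\Big),$$ where $|T|$ is the number of edges of $T$, $\mathbb{E}_\sigma$ is expectation over $\sigma$, and the implied constant depends only on $d_1,d_2,C$. *)

theory Defs
  imports "HOL-Probability.Probability"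
begin

definition simple_graph :: "'a set \<Rightarrow> 'a set set \<Rightarrow> bool" where
  "simple_graph V E \<longleftrightarrow> finite V \<and> (\<forall>e\<in>E. \<exists>u w. e = {u, w} \<and> u \<noteq> w \<and> u \<in> V \<and> w \<in> V)"

definition graph_connected :: "'a set \<Rightarrow> 'a set set \<Rightarrow> bool" where
  "graph_connected V E \<longleftrightarrow> (\<forall>u\<in>V. \<forall>w\<in>V. (u, w) \<in> {(x, y). {x, y} \<in> E}\<^sup>*)"

definition has_cycle :: "'a set set \<Rightarrow> bool" where
  "has_cycle E \<longleftrightarrow> (\<exists>vs. length vs \<ge> 3 \<and> distinct vs \<and>
      (\<forall>i<length vs. {vs ! i, vs ! ((i + 1) mod length vs)} \<in> E))"

definition is_tree :: "'a set \<Rightarrow> 'a set set \<Rightarrow> bool" where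
  "is_tree V E \<longleftrightarrow> simple_graph V E \<and> V \<noteq> {} \<and> graph_connected V E \<and> \<not> has_cycle E"

text \<open>Balanced labellings of [2n] = {1..2n}: sigma i in {+1,-1} on [2n], exactly n entries +1,
  and sigma i = 0 outside [2n] (normalisation so the set is finite).\<close>
definition balanced_labellings :: "nat \<Rightarrow> (nat \<Rightarrow> int) set" where
  "balanced_labellings n = {\<sigma>. (\<forall>i\<in>{1..2*n}. \<sigma> i \<in> {1, -1}) \<and> (\<forall>i. i \<notin> {1..2*n} \<longrightarrow> \<sigma> i = 0)
      \<and> card {i\<in>{1..2*n}. \<sigma> i = 1} = n}"

definition edge_weight :: "nat \<Rightarrow> nat \<Rightarrow> (nat \<Rightarrow> int) \<Rightarrow> nat set \<Rightarrow> nat" where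
  "edge_weight d1 d2 \<sigma> e = (if \<forall>u\<in>e. \<forall>w\<in>e. \<sigma> u = \<sigma> w then d1 else d2)"

end

theory Submission
  imports Defs "HOL-Real_Asymp.Real_Asymp"
begin

text \<open>Remove a leaf edge {u, v} of the tree, v being the leaf. Swapping the label of v with that
  of any vertex x outside the rest of the tree leaves the weight of the rest unchanged, so the
  expected total weight does not change when {u, v} is replaced by {u, x}; averaging over the at least
  2n - 2|T| such x and using that u has exactly n vertices of each label in [2n] bounds the
  factor contributed by the leaf edge by n (d1 + d2) / (2n - 2|T|). Induction bounds the
  expectation by ((d1 + d2) / 2n)^|T| (n / (n - |T|))^|T|, and
  (1 + |T| / (n - |T|))^|T| \<le> exp (|T|^2 / (n - |T|)) = 1 + O((log n)^2 / n).\<close>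

definition edge_path :: "'a set set \<Rightarrow> 'a list \<Rightarrow> bool" where
  "edge_path E vs \<longleftrightarrow> distinct vs \<and> (\<forall>i. Suc i < length vs \<longrightarrow> {vs ! i, vs ! Suc i} \<in> E)"

lemma edge_path_Cons:
  "edge_path E (x # vs) \<longleftrightarrow> x \<notin> set vs \<and> edge_path E vs \<and> (vs \<noteq> [] \<longrightarrow> {x, vs ! 0} \<in> E)"
  unfolding edge_path_def by (auto simp: nth_Cons split: nat.splits)

lemma edge_path_closing_edge_imp_has_cycle:
  assumes "edge_path E vs" "j < length vs" "2 \<le> j" "{vs ! j, vs ! 0} \<in> E"
  shows "has_cycle E"
  unfolding has_cycle_def
proof (intro exI[of _ "take (Suc j) vs"] conjI allI impI)
  show "3 \<le> length (take (Suc j) vs)" "distinct (take (Suc j) vs)"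
    using assms(1-3) by (auto simp: edge_path_def)
  fix i assume "i < length (take (Suc j) vs)"
  then consider "i < j" | "i = j" using assms(2) by fastforce
  then show "{take (Suc j) vs ! i, take (Suc j) vs ! ((i + 1) mod length (take (Suc j) vs))} \<in> E"
    by cases (use assms in \<open>auto simp: edge_path_def\<close>)
qed

lemma acyclic_edge_path_extend:
  assumes "\<not> has_cycle E" "edge_path E (v # u # us)" "{x, v} \<in> E" "x \<noteq> v" "x \<noteq> u"
  shows "edge_path E (x # v # u # us)"
proof -
  let ?vs = "v # u # us"
  have "x \<notin> set ?vs"
  proof
    assume "x \<in> set ?vs"
    then obtain j where "j < length ?vs" "?vs ! j = x" unfolding in_set_conv_nth by blast
    moreover have "2 \<le> j" using calculation assms(4,5) by (cases "j = 0 \<or> j = 1") auto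
    ultimately show False
      using edge_path_closing_edge_imp_has_cycle[OF assms(2)] assms(1,3) by auto
  qed
  then show ?thesis using assms(2,3) by (simp add: edge_path_Cons)
qed

text \<open>The first vertex of a longest path is a leaf: another edge at it would either extend the
  path or close a cycle.\<close>

lemma acyclic_has_leaf_edge:
  assumes "finite E" "\<forall>e\<in>E. \<exists>a b. e = {a, b} \<and> a \<noteq> b" "\<not> has_cycle E" "E \<noteq> {}"
  obtains u v where "{u, v} \<in> E" "u \<noteq> v" "\<forall>e\<in>E - {{u, v}}. v \<notin> e"
proof -
  define long_path where "long_path vs \<longleftrightarrow> edge_path E vs \<and> set vs \<subseteq> \<Union>E \<and> 2 \<le> length vs" for vs
  have finite_vertices: "finite (\<Union>E)" using assms(1,2) by fastforce
  have bounded: "length vs < Suc (card (\<Union>E))" if "long_path vs" for vs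
  proof -
    have "length vs = card (set vs)"
      using that by (simp add: long_path_def edge_path_def distinct_card)
    also have "\<dots> \<le> card (\<Union>E)"
      using that finite_vertices by (intro card_mono) (auto simp: long_path_def)
    finally show ?thesis by simp
  qed
  obtain e where e: "e \<in> E" using assms(4) by blast
  with assms(2) obtain a b where "e = {a, b}" "a \<noteq> b" by blast
  with e have "long_path [a, b]" by (auto simp: long_path_def edge_path_def)
  then obtain vs where vs: "long_path vs" and longest: "\<And>ws. long_path ws \<Longrightarrow> length ws \<le> length vs"
    using ex_has_greatest_nat[of long_path _ length] bounded by blast
  then have "Suc (Suc 0) \<le> length vs" by (simp add: long_path_def)
  then obtain v u us where vs_eq: "vs = v # u # us" by (auto simp: Suc_le_length_iff)
  with vs have path: "edge_path E (v # u # us)" by (simp add: long_path_def)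
  then have "{u, v} \<in> E" "u \<noteq> v" by (auto simp: edge_path_Cons insert_commute)
  moreover have "\<forall>e\<in>E - {{u, v}}. v \<notin> e"
  proof (intro ballI notI)
    fix e assume e: "e \<in> E - {{u, v}}" and "v \<in> e"
    from e have "e \<in> E" by blast
    with assms(2) obtain a b where "e = {a, b}" "a \<noteq> b" by blast
    define x where "x = (if a = v then b else a)"
    have x: "e = {x, v}" "x \<noteq> v" using \<open>v \<in> e\<close> \<open>e = {a, b}\<close> \<open>a \<noteq> b\<close> by (auto simp: x_def)
    with e have "x \<noteq> u" by auto
    with x e have "long_path (x # vs)"
      using acyclic_edge_path_extend[OF assms(3) path] vs vs_eq by (auto simp: long_path_def)
    then show False using longest by fastforce
  qed
  ultimately show thesis using that by blast
qed

definition forest_on :: "'a set \<Rightarrow> 'a set set \<Rightarrow> bool" where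
  "forest_on A E \<longleftrightarrow> finite E \<and> (\<forall>e\<in>E. \<exists>a b. e = {a, b} \<and> a \<noteq> b \<and> a \<in> A \<and> b \<in> A) \<and> \<not> has_cycle E"

lemma forest_on_Diff: "forest_on A E \<Longrightarrow> forest_on A (E - F)"
  unfolding forest_on_def has_cycle_def by blast

lemma forest_on_vertices: "forest_on A E \<Longrightarrow> \<Union>E \<subseteq> A"
  unfolding forest_on_def by fastforce

lemma tree_imp_forest_on:
  assumes "is_tree V E" "V \<subseteq> A"
  shows "forest_on A E"
proof -
  have "E \<subseteq> Pow V" "finite V"
    using assms(1) by (auto simp: is_tree_def simple_graph_def)
  then have "finite E" by (meson finite_Pow_iff finite_subset)
  with assms show ?thesis
    unfolding forest_on_def is_tree_def simple_graph_def by blast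
qed

lemma card_Union_doubletons_le:
  assumes "\<forall>e\<in>E. \<exists>a b. e = {a, b}"
  shows "card (\<Union>E) \<le> 2 * card E"
proof -
  have "card (\<Union>E) \<le> (\<Sum>e\<in>E. card e)" by (rule card_Union_le_sum_card)
  also have "\<dots> \<le> (\<Sum>e\<in>E. 2)" using assms by (intro sum_mono) (auto simp: card_insert_if)
  finally show ?thesis by simp
qed

lemma card_avoiding_forest_ge:
  assumes "forest_on {1..2*n} E"
  shows "2 * n - (2 * card E + 1) \<le> card ({1..2*n} - (\<Union>E \<union> {u}))"
proof -
  have "card (\<Union>E \<union> {u}) \<le> 2 * card E + 1"
    using card_Union_doubletons_le[of E] card_Un_le[of "\<Union>E" "{u}"] assms
    unfolding forest_on_def by fastforce
  then show ?thesis
    using diff_card_le_card_Diff[of "\<Union>E \<union> {u}" "{1..2*n}"]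
      finite_subset[OF forest_on_vertices[OF assms]] by simp
qed

lemma balanced_labellings_finite: "finite (balanced_labellings n)"
proof (rule finite_subset)
  show "balanced_labellings n \<subseteq>
      {\<sigma>. \<forall>i. (i \<in> {1..2*n} \<longrightarrow> \<sigma> i \<in> {1, -1}) \<and> (i \<notin> {1..2*n} \<longrightarrow> \<sigma> i = 0)}"
    by (auto simp: balanced_labellings_def)
qed (intro finite_set_of_finite_funs; simp)

lemma balanced_labellings_nonempty: "balanced_labellings n \<noteq> {}"
proof -
  define \<sigma> :: "nat \<Rightarrow> int" where
    "\<sigma> i = (if i \<in> {1..n} then 1 else if i \<in> {n+1..2*n} then -1 else 0)" for i
  have "{i\<in>{1..2*n}. \<sigma> i = 1} = {1..n}" by (auto simp: \<sigma>_def)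
  then have "\<sigma> \<in> balanced_labellings n" by (auto simp: balanced_labellings_def \<sigma>_def)
  then show ?thesis by blast
qed

lemma balanced_labelling_comp_permutes:
  assumes \<sigma>: "\<sigma> \<in> balanced_labellings n" and \<pi>: "\<pi> permutes {1..2*n}"
  shows "\<sigma> \<circ> \<pi> \<in> balanced_labellings n"
proof -
  have "\<pi> ` {i\<in>{1..2*n}. \<sigma> (\<pi> i) = 1} = {i\<in>{1..2*n}. \<sigma> i = 1}"
  proof (intro equalityI subsetI)
    fix i assume i: "i \<in> {i\<in>{1..2*n}. \<sigma> i = 1}"
    have "inv \<pi> i \<in> {1..2*n}" using i permutes_in_image[OF permutes_inv[OF \<pi>]] by blast
    with i show "i \<in> \<pi> ` {i\<in>{1..2*n}. \<sigma> (\<pi> i) = 1}"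
      by (auto simp: permutes_inverses[OF \<pi>] intro!: image_eqI[of _ _ "inv \<pi> i"])
  next
    fix i assume "i \<in> \<pi> ` {i\<in>{1..2*n}. \<sigma> (\<pi> i) = 1}"
    then obtain j where "j \<in> {1..2*n}" "\<sigma> (\<pi> j) = 1" "i = \<pi> j" by blast
    then show "i \<in> {i\<in>{1..2*n}. \<sigma> i = 1}" using permutes_in_image[OF \<pi>, of j] by blast
  qed
  then have "card {i\<in>{1..2*n}. \<sigma> (\<pi> i) = 1} = card {i\<in>{1..2*n}. \<sigma> i = 1}"
    using card_image[OF permutes_inj_on[OF \<pi>]] by metis
  also have "\<dots> = n" using \<sigma> by (simp add: balanced_labellings_def)
  finally have card: "card {i\<in>{1..2*n}. (\<sigma> \<circ> \<pi>) i = 1} = n" by simp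
  moreover have "\<pi> i \<in> {1..2*n}" if "i \<in> {1..2*n}" for i
    using that permutes_in_image[OF \<pi>] by blast
  moreover have "\<pi> i = i" if "i \<notin> {1..2*n}" for i
    using that permutes_not_in[OF \<pi>] by blast
  ultimately show ?thesis using \<sigma> by (simp add: balanced_labellings_def)
qed

lemma sum_balanced_labellings_comp_permutes:
  assumes \<pi>: "\<pi> permutes {1..2*n}"
  shows "(\<Sum>\<sigma>\<in>balanced_labellings n. h (\<sigma> \<circ> \<pi>)) = (\<Sum>\<sigma>\<in>balanced_labellings n. h \<sigma>)"
proof (rule sum.reindex_bij_witness[where i = "\<lambda>\<sigma>. \<sigma> \<circ> inv \<pi>" and j = "\<lambda>\<sigma>. \<sigma> \<circ> \<pi>"])
  show "\<sigma> \<circ> inv \<pi> \<circ> \<pi> = \<sigma>" "\<sigma> \<circ> \<pi> \<circ> inv \<pi> = \<sigma>" for \<sigma> :: "nat \<Rightarrow> int"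
    by (simp_all add: comp_assoc permutes_inv_o[OF \<pi>])
  show "\<sigma> \<circ> \<pi> \<in> balanced_labellings n" if "\<sigma> \<in> balanced_labellings n" for \<sigma>
    using that \<pi> by (rule balanced_labelling_comp_permutes)
  show "\<sigma> \<circ> inv \<pi> \<in> balanced_labellings n" if "\<sigma> \<in> balanced_labellings n" for \<sigma>
    using that permutes_inv[OF \<pi>] by (rule balanced_labelling_comp_permutes)
qed simp

lemma card_same_label:
  assumes \<sigma>: "\<sigma> \<in> balanced_labellings n" and u: "u \<in> {1..2*n}"
  shows "card {x\<in>{1..2*n}. \<sigma> x = \<sigma> u} = n"
proof -
  let ?plus = "{i\<in>{1..2*n}. \<sigma> i = 1}"
  have labels: "\<sigma> i = 1 \<or> \<sigma> i = -1" if "i \<in> {1..2*n}" for i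
    using \<sigma> that by (auto simp: balanced_labellings_def)
  have plus: "card ?plus = n" using \<sigma> by (simp add: balanced_labellings_def)
  show ?thesis
  proof (cases "\<sigma> u = 1")
    case True
    then show ?thesis using plus by simp
  next
    case False
    then have "\<sigma> u = -1" using labels[OF u] by simp
    then have "\<sigma> x = \<sigma> u \<longleftrightarrow> \<sigma> x \<noteq> 1" if "x \<in> {1..2*n}" for x
      using labels[OF that] by auto
    then have "{x\<in>{1..2*n}. \<sigma> x = \<sigma> u} = {1..2*n} - ?plus" by blast
    also have "card \<dots> = n" using plus by (subst card_Diff_subset) auto
    finally show ?thesis .
  qed
qed

lemma edge_weight_doubleton: "edge_weight d1 d2 \<sigma> {u, v} = (if \<sigma> u = \<sigma> v then d1 else d2)"
  by (auto simp: edge_weight_def)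

lemma sum_edge_weight_doubleton:
  assumes "\<sigma> \<in> balanced_labellings n" "u \<in> {1..2*n}"
  shows "(\<Sum>x\<in>{1..2*n}. real (edge_weight d1 d2 \<sigma> {u, x})) = real n * (real d1 + real d2)"
proof -
  let ?same = "{x\<in>{1..2*n}. \<sigma> x = \<sigma> u}"
  have same: "card ?same = n" by (rule card_same_label[OF assms])
  have "card {x\<in>{1..2*n}. \<sigma> x \<noteq> \<sigma> u} = card ({1..2*n} - ?same)"
    by (rule arg_cong[where f = card]) blast
  also have "\<dots> = n" using same by (subst card_Diff_subset) auto
  finally have different: "card {x\<in>{1..2*n}. \<sigma> x \<noteq> \<sigma> u} = n" .
  have "(\<Sum>x\<in>{1..2*n}. real (edge_weight d1 d2 \<sigma> {u, x}))
      = (\<Sum>x\<in>{1..2*n}. if \<sigma> x = \<sigma> u then real d1 else real d2)"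
    by (intro sum.cong) (auto simp: edge_weight_doubleton)
  also have "\<dots> = real (card ?same) * real d1 + real (card {x\<in>{1..2*n}. \<sigma> x \<noteq> \<sigma> u}) * real d2"
    by (simp add: sum.If_cases Int_def Collect_conj_eq[symmetric])
  also have "\<dots> = real n * (real d1 + real d2)"
    by (simp only: same different) (simp add: algebra_simps)
  finally show ?thesis .
qed

lemma leaf_weight_averaging:
  assumes u: "u \<in> {1..2*n}" and M: "M \<subseteq> {1..2*n}" "u \<notin> M" "v \<in> M"
    and G_nonneg: "\<And>\<sigma>. 0 \<le> G \<sigma>"
    and G_invariant: "\<And>\<sigma> x. x \<in> M \<Longrightarrow> G (\<sigma> \<circ> Transposition.transpose v x) = G \<sigma>"
  shows "real (card M) * (\<Sum>\<sigma>\<in>balanced_labellings n. real (edge_weight d1 d2 \<sigma> {u, v}) * G \<sigma>)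
    \<le> real n * (real d1 + real d2) * (\<Sum>\<sigma>\<in>balanced_labellings n. G \<sigma>)"
proof -
  let ?S = "balanced_labellings n"
  let ?w = "\<lambda>\<sigma> x. real (edge_weight d1 d2 \<sigma> {u, x})"
  have moved: "(\<Sum>\<sigma>\<in>?S. ?w \<sigma> x * G \<sigma>) = (\<Sum>\<sigma>\<in>?S. ?w \<sigma> v * G \<sigma>)" if x: "x \<in> M" for x
  proof -
    have \<pi>: "Transposition.transpose v x permutes {1..2*n}" using M x by (intro permutes_swap_id) auto
    have "Transposition.transpose v x u = u" using M(2,3) x by (metis transpose_apply_other)
    then have "?w (\<sigma> \<circ> Transposition.transpose v x) v * G (\<sigma> \<circ> Transposition.transpose v x) = ?w \<sigma> x * G \<sigma>" for \<sigma>
      using G_invariant[OF x] by (simp add: edge_weight_doubleton)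
    then show ?thesis using sum_balanced_labellings_comp_permutes[OF \<pi>, of "\<lambda>\<sigma>. ?w \<sigma> v * G \<sigma>"] by simp
  qed
  have "real (card M) * (\<Sum>\<sigma>\<in>?S. ?w \<sigma> v * G \<sigma>) = (\<Sum>x\<in>M. \<Sum>\<sigma>\<in>?S. ?w \<sigma> x * G \<sigma>)"
    by (simp add: moved)
  also have "\<dots> = (\<Sum>\<sigma>\<in>?S. G \<sigma> * (\<Sum>x\<in>M. ?w \<sigma> x))"
    by (subst sum.swap) (simp add: sum_distrib_left mult.commute)
  also have "\<dots> \<le> (\<Sum>\<sigma>\<in>?S. G \<sigma> * (\<Sum>x\<in>{1..2*n}. ?w \<sigma> x))"
    using M G_nonneg by (intro sum_mono mult_left_mono sum_mono2) auto
  also have "\<dots> = (\<Sum>\<sigma>\<in>?S. G \<sigma> * (real n * (real d1 + real d2)))"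
    by (rule sum.cong[OF refl]) (subst sum_edge_weight_doubleton[OF _ u]; simp)
  also have "\<dots> = real n * (real d1 + real d2) * (\<Sum>\<sigma>\<in>?S. G \<sigma>)"
    by (simp add: sum_distrib_right mult.commute)
  finally show ?thesis .
qed

lemma edge_weight_comp_fixing:
  "\<forall>y\<in>e. \<pi> y = y \<Longrightarrow> edge_weight d1 d2 (\<sigma> \<circ> \<pi>) e = edge_weight d1 d2 \<sigma> e"
  by (simp add: edge_weight_def)

lemma sum_weight_remove_leaf_le:
  assumes forest: "forest_on {1..2*n} E" and m: "card E \<le> m" "m < n"
    and uv: "{u, v} \<in> E" "u \<noteq> v" and leaf: "\<forall>e\<in>E - {{u, v}}. v \<notin> e"
  shows "(\<Sum>\<sigma>\<in>balanced_labellings n. \<Prod>e\<in>E. real (edge_weight d1 d2 \<sigma> e))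
    \<le> real n * (real d1 + real d2) / (2 * real n - 2 * real m)
      * (\<Sum>\<sigma>\<in>balanced_labellings n. \<Prod>e\<in>E - {{u, v}}. real (edge_weight d1 d2 \<sigma> e))"
proof -
  let ?S = "balanced_labellings n"
  define E' where "E' = E - {{u, v}}"
  define G where "G \<sigma> = (\<Prod>e\<in>E'. real (edge_weight d1 d2 \<sigma> e))" for \<sigma>
  define M where "M = {1..2*n} - (\<Union>E' \<union> {u})"
  note leaf = leaf[folded E'_def]
  have finite: "finite E" using forest by (simp add: forest_on_def)
  have forest': "forest_on {1..2*n} E'" using forest by (simp add: E'_def forest_on_Diff)
  have "0 < card E" using finite uv(1) by (auto simp: card_gt_0_iff)
  then have card': "card E' < m" using m finite uv(1) by (simp add: E'_def)
  have u: "u \<in> {1..2*n}" and v: "v \<in> {1..2*n}" using forest_on_vertices[OF forest] uv(1) by auto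
  have G_nonneg: "0 \<le> G \<sigma>" for \<sigma> by (simp add: G_def prod_nonneg)
  have "2 * n - (2 * card E' + 1) \<le> card M"
    unfolding M_def by (rule card_avoiding_forest_ge[OF forest'])
  then have card_M: "2 * real n - 2 * real m \<le> real (card M)"
    using card' m(2) by linarith
  have "real (card M) * (\<Sum>\<sigma>\<in>?S. real (edge_weight d1 d2 \<sigma> {u, v}) * G \<sigma>)
      \<le> real n * (real d1 + real d2) * (\<Sum>\<sigma>\<in>?S. G \<sigma>)"
  proof (rule leaf_weight_averaging[OF u _ _ _ G_nonneg])
    show "M \<subseteq> {1..2*n}" "u \<notin> M" by (auto simp: M_def)
    show "v \<in> M" using v leaf uv by (auto simp: M_def)
    show "G (\<sigma> \<circ> Transposition.transpose v x) = G \<sigma>" if "x \<in> M" for \<sigma> x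
      unfolding G_def
    proof (intro prod.cong refl arg_cong[where f = real] edge_weight_comp_fixing)
      fix e assume "e \<in> E'"
      then have "v \<notin> e" "x \<notin> e" using leaf that by (auto simp: M_def)
      then show "\<forall>y\<in>e. Transposition.transpose v x y = y" by (metis transpose_apply_other)
    qed
  qed
  moreover have "0 \<le> (\<Sum>\<sigma>\<in>?S. real (edge_weight d1 d2 \<sigma> {u, v}) * G \<sigma>)"
    by (intro sum_nonneg mult_nonneg_nonneg G_nonneg) simp
  ultimately have "(2 * real n - 2 * real m) * (\<Sum>\<sigma>\<in>?S. real (edge_weight d1 d2 \<sigma> {u, v}) * G \<sigma>)
      \<le> real n * (real d1 + real d2) * (\<Sum>\<sigma>\<in>?S. G \<sigma>)"
    using card_M by (meson mult_right_mono order_trans)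
  moreover have "0 < 2 * real n - 2 * real m" using m(2) by simp
  ultimately show ?thesis
    using prod.remove[OF finite uv(1), of "\<lambda>e. real (edge_weight d1 d2 _ e)"]
    by (simp add: G_def E'_def edge_weight_doubleton pos_le_divide_eq mult.commute)
qed

lemma sum_forest_weight_le:
  assumes "forest_on {1..2*n} E" "card E \<le> m" "m < n"
  shows "(\<Sum>\<sigma>\<in>balanced_labellings n. \<Prod>e\<in>E. real (edge_weight d1 d2 \<sigma> e))
    \<le> (real n * (real d1 + real d2) / (2 * real n - 2 * real m)) ^ card E
      * real (card (balanced_labellings n))"
  using assms(1,2)
proof (induction "card E" arbitrary: E)
  case 0
  then show ?case by (simp add: forest_on_def)
next
  case (Suc k)
  let ?c = "real n * (real d1 + real d2) / (2 * real n - 2 * real m)"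
  have "finite E" "\<forall>e\<in>E. \<exists>a b. e = {a, b} \<and> a \<noteq> b" "\<not> has_cycle E"
    using Suc.prems(1) unfolding forest_on_def by fast+
  moreover have "E \<noteq> {}" using Suc.hyps(2) by auto
  ultimately obtain u v where uv: "{u, v} \<in> E" "u \<noteq> v" and leaf: "\<forall>e\<in>E - {{u, v}}. v \<notin> e"
    by (rule acyclic_has_leaf_edge)
  have "forest_on {1..2*n} (E - {{u, v}})" using Suc.prems(1) by (rule forest_on_Diff)
  moreover have "k = card (E - {{u, v}})" using Suc.hyps(2) Suc.prems(1) uv
    by (simp add: forest_on_def)
  ultimately have IH: "(\<Sum>\<sigma>\<in>balanced_labellings n. \<Prod>e\<in>E - {{u, v}}. real (edge_weight d1 d2 \<sigma> e))
      \<le> ?c ^ k * real (card (balanced_labellings n))"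
    using Suc.hyps(1) Suc.hyps(2) Suc.prems(2) by fastforce
  have "(\<Sum>\<sigma>\<in>balanced_labellings n. \<Prod>e\<in>E. real (edge_weight d1 d2 \<sigma> e))
      \<le> ?c * (\<Sum>\<sigma>\<in>balanced_labellings n. \<Prod>e\<in>E - {{u, v}}. real (edge_weight d1 d2 \<sigma> e))"
    by (rule sum_weight_remove_leaf_le[OF Suc.prems assms(3) uv leaf])
  also have "\<dots> \<le> ?c * (?c ^ k * real (card (balanced_labellings n)))"
    using IH assms(3) by (intro mult_left_mono) auto
  finally show ?case by (simp add: Suc.hyps(2)[symmetric] mult.assoc)
qed

lemma expectation_forest_weight_le:
  assumes "forest_on {1..2*n} E" "card E < n"
  shows "measure_pmf.expectation (pmf_of_set (balanced_labellings n))
      (\<lambda>\<sigma>. \<Prod>e\<in>E. real (edge_weight d1 d2 \<sigma> e) / real n)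
    \<le> ((real d1 + real d2) / (2 * real n)) ^ card E * (real n / (real n - real (card E))) ^ card E"
proof -
  let ?S = "balanced_labellings n"
  let ?m = "card E"
  have n: "0 < real n" "real ?m < real n" using assms(2) by auto
  have card_S: "0 < real (card ?S)"
    using balanced_labellings_finite balanced_labellings_nonempty by (simp add: card_gt_0_iff)
  have "measure_pmf.expectation (pmf_of_set ?S) (\<lambda>\<sigma>. \<Prod>e\<in>E. real (edge_weight d1 d2 \<sigma> e) / real n)
      = (\<Sum>\<sigma>\<in>?S. \<Prod>e\<in>E. real (edge_weight d1 d2 \<sigma> e)) / real n ^ ?m / real (card ?S)"
    by (simp add: integral_pmf_of_set[OF balanced_labellings_nonempty balanced_labellings_finite]
        prod_dividef sum_divide_distrib mult.commute)
  also have "\<dots> \<le> (real n * (real d1 + real d2) / (2 * real n - 2 * real ?m)) ^ ?m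
      * real (card ?S) / real n ^ ?m / real (card ?S)"
    using sum_forest_weight_le[OF assms(1) order_refl assms(2), of d1 d2] n
    by (intro divide_right_mono) auto
  also have "\<dots> = (real n * (real d1 + real d2) / (2 * real n - 2 * real ?m) / real n) ^ ?m"
    using card_S n by (simp add: power_divide power_mult_distrib)
  also have "real n * (real d1 + real d2) / (2 * real n - 2 * real ?m) / real n
      = (real d1 + real d2) / (2 * real n) * (real n / (real n - real ?m))"
    using n by (simp add: field_simps)
  finally show ?thesis by (simp only: power_mult_distrib)
qed

lemma ratio_power_le:
  fixes m :: nat and x :: real
  assumes "2 * real m \<le> x" "4 * (real m)\<^sup>2 \<le> x"
  shows "(x / (x - real m)) ^ m \<le> 1 + 4 * (real m)\<^sup>2 / x"
proof (cases "m = 0")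
  case False
  then have x: "0 < x" "x / 2 \<le> x - real m" using assms(1) by auto
  define t where "t = real m / (x - real m)"
  have t: "0 \<le> t" "x / (x - real m) = 1 + t" using x by (auto simp: t_def field_simps)
  have mt: "real m * t \<le> 2 * (real m)\<^sup>2 / x"
  proof -
    have "real m * t = (real m)\<^sup>2 / (x - real m)" by (simp add: t_def power2_eq_square)
    also have "\<dots> \<le> (real m)\<^sup>2 / (x / 2)" using x by (intro divide_left_mono) auto
    finally show ?thesis by (simp add: mult.commute)
  qed
  have small: "2 * (real m)\<^sup>2 / x \<le> 1 / 2" using assms(2) x(1) by (simp add: field_simps)
  have "(1 + t) ^ m \<le> exp t ^ m" using t(1) by (intro power_mono) (auto simp: add.commute exp_ge_add_one_self)
  also have "\<dots> = exp (real m * t)" by (simp add: exp_of_nat_mult)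
  also have "\<dots> \<le> 1 + 2 * (real m * t)"
    using mt small t(1) by (intro real_exp_bound_lemma) auto
  also have "\<dots> \<le> 1 + 4 * (real m)\<^sup>2 / x" using mt by simp
  finally show ?thesis using t(2) by simp
qed simp

lemma expectation_tree_weight_le:
  assumes "is_tree V E" "V \<subseteq> {1..2*n}" "0 < n"
    and "2 * real (card E) \<le> real n" "4 * (real (card E))\<^sup>2 \<le> real n"
  shows "measure_pmf.expectation (pmf_of_set (balanced_labellings n))
      (\<lambda>\<sigma>. \<Prod>e\<in>E. real (edge_weight d1 d2 \<sigma> e) / real n)
    \<le> ((real d1 + real d2) / (2 * real n)) ^ card E * (1 + 4 * (real (card E))\<^sup>2 / real n)"
proof -
  have "measure_pmf.expectation (pmf_of_set (balanced_labellings n))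
      (\<lambda>\<sigma>. \<Prod>e\<in>E. real (edge_weight d1 d2 \<sigma> e) / real n)
    \<le> ((real d1 + real d2) / (2 * real n)) ^ card E * (real n / (real n - real (card E))) ^ card E"
    using assms(3-) by (intro expectation_forest_weight_le tree_imp_forest_on[OF assms(1,2)]) auto
  also have "\<dots> \<le> ((real d1 + real d2) / (2 * real n)) ^ card E * (1 + 4 * (real (card E))\<^sup>2 / real n)"
    using ratio_power_le[OF assms(4,5)] by (intro mult_left_mono) auto
  finally show ?thesis .
qed

theorem lemma6p13:
  fixes d1 d2 :: nat and C :: real
  assumes "d1 > 0" and "d2 > 0" and "C > 0"
  shows "\<exists>K N. \<forall>n\<ge>N. \<forall>(V :: nat set) (E :: nat set set).
    is_tree V E \<and> V \<subseteq> {1..2*n} \<and> real (card E) \<le> C * ln (real n) \<longrightarrow>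
    measure_pmf.expectation (pmf_of_set (balanced_labellings n))
      (\<lambda>\<sigma>. \<Prod>e\<in>E. real (edge_weight d1 d2 \<sigma> e) / real n)
    \<le> ((real d1 + real d2) / (2 * real n)) ^ card E * (1 + K * (ln (real n))\<^sup>2 / real n)"
proof -
  have "eventually (\<lambda>n::nat. 1 \<le> n \<and> 2 * (C * ln (real n)) \<le> real n
      \<and> 4 * (C * ln (real n))\<^sup>2 \<le> real n) at_top"
    using assms(3) by (intro eventually_conj eventually_ge_at_top; real_asymp)
  then obtain N where N: "\<And>n. N \<le> n \<Longrightarrow>
      1 \<le> n \<and> 2 * (C * ln (real n)) \<le> real n \<and> 4 * (C * ln (real n))\<^sup>2 \<le> real n"
    unfolding eventually_at_top_linorder by blast
  show ?thesis
  proof (intro exI[of _ "4 * C\<^sup>2"] exI[of _ N] allI impI, elim conjE)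
    fix n V and E :: "nat set set"
    assume "N \<le> n" and tree: "is_tree V E" "V \<subseteq> {1..2*n}" and m: "real (card E) \<le> C * ln (real n)"
    have n: "1 \<le> n" "2 * (C * ln (real n)) \<le> real n" "4 * (C * ln (real n))\<^sup>2 \<le> real n"
      using N[OF \<open>N \<le> n\<close>] by blast+
    have m_sq: "(real (card E))\<^sup>2 \<le> (C * ln (real n))\<^sup>2"
      using m by (intro power_mono) auto
    then have small: "2 * real (card E) \<le> real n" "4 * (real (card E))\<^sup>2 \<le> real n"
      using m n by linarith+
    let ?base = "((real d1 + real d2) / (2 * real n)) ^ card E"
    have "measure_pmf.expectation (pmf_of_set (balanced_labellings n))
        (\<lambda>\<sigma>. \<Prod>e\<in>E. real (edge_weight d1 d2 \<sigma> e) / real n)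
      \<le> ?base * (1 + 4 * (real (card E))\<^sup>2 / real n)"
      using n(1) by (intro expectation_tree_weight_le[OF tree _ small]) auto
    also have "\<dots> \<le> ?base * (1 + 4 * C\<^sup>2 * (ln (real n))\<^sup>2 / real n)"
      using m_sq by (intro mult_left_mono add_left_mono divide_right_mono) (auto simp: power_mult_distrib)
    finally show "measure_pmf.expectation (pmf_of_set (balanced_labellings n))
        (\<lambda>\<sigma>. \<Prod>e\<in>E. real (edge_weight d1 d2 \<sigma> e) / real n)
      \<le> ?base * (1 + 4 * C\<^sup>2 * (ln (real n))\<^sup>2 / real n)" .
  qed
qed

end
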